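(* Let $n\ge5$ and let $C=(1,c_2,\dots,c_{n-1},2c_{n-1}-c_2)$ be a system with $n$ coin types, with subsystem $C'=(1,c_2,\dots,c_{n-1})$. Then $C$ is canonical and $C'$ is noncanonical if and only if $C=(1,2,\dots,n-3,c_{n-2},c_{n-2}+1,2c_{n-2})$ and $c_{n-2}>n-2$.
   Context: A system is a tuple $C=(c_1,\dots,c_n)$ of integers with $1=c_1<c_2<\dots<c_n$; for $k\le n$, $(c_1,\dots,c_k)$ is a subsystem. For a positive integer $v$, $\mathrm{opt}_C(v)$ is the minimum of $\sum_i x_i$ over $x\in\mathbb{Z}_{\ge0}^n$ with $\sum_i c_ix_i=v$. The greedy representation of $v$ is produced by: for $i=n$ down to $1$, while $c_i\le$ remaining value, take a coin $c_i$. $\mathrm{grd}_C(v)$ is its number of coins. A positive integer $w$ is a counterexample if $\mathrm{opt}_C(w)<\mathrm{grd}_C(w)$; $C$ is canonical if it has none, noncanonical otherwise. *)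

theory Defs
  imports Main
begin

text \<open>A coin system is a list C = [c_1,...,c_n] (0-based: c_i = C!(i-1))
  with c_1 = 1 and strictly increasing entries.\<close>
definition coin_system :: "nat list \<Rightarrow> bool" where
  "coin_system C \<longleftrightarrow> C \<noteq> [] \<and> C ! 0 = 1 \<and> sorted_wrt (<) C"

definition opt :: "nat list \<Rightarrow> nat \<Rightarrow> nat" where
  "opt C v = (LEAST k. \<exists>x :: nat \<Rightarrow> nat.
      (\<Sum>i<length C. C ! i * x i) = v \<and> (\<Sum>i<length C. x i) = k)"

fun greedy_desc :: "nat list \<Rightarrow> nat \<Rightarrow> nat" where
  "greedy_desc [] v = 0"
| "greedy_desc (c # cs) v = v div c + greedy_desc cs (v mod c)"

definition grd :: "nat list \<Rightarrow> nat \<Rightarrow> nat" where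
  "grd C v = greedy_desc (rev C) v"

definition counterexample :: "nat list \<Rightarrow> nat \<Rightarrow> bool" where
  "counterexample C w \<longleftrightarrow> w > 0 \<and> opt C w < grd C w"

definition canonical :: "nat list \<Rightarrow> bool" where
  "canonical C \<longleftrightarrow> (\<forall>w. \<not> counterexample C w)"

end

theory Submission
  imports Defs
begin

(* Write C' = (1, c_2, ..., c_(n-1)), A = c_(n-2), b = c_(n-1) and d = c_2, so that c_n = 2b - d.

   For C = (1, ..., m, A, A+1, 2A), greedy pays 2Aq + r with q coins plus greedy for
   (1, ..., m, A, A+1) on r < 2A, which is explicit; one checks that removing a single coin never
   lowers the greedy count by more than one, so C is canonical, while in C' the value 2A = A + A
   beats the greedy (A+1) + (A-1).

   Conversely, let w be the least counterexample of C' and x a representation of w with fewer coins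
   than greedy. Canonicity of C forces w >= c_n; minimality of w forces x to avoid b and to satisfy
   w < b + c for every coin c it uses, so 2b - d <= w < b + A. Canonicity of C at 2b - 1 gives
   b + 1 >= A + d. Hence x uses only the coin A, so w = 2A, d = 2 and b = A + 1. Finally greedy
   is optimal at A + e for every coin e < A, which makes e - 1 a coin, and fails at 2A, which keeps
   A - 1 out: the small coins are 1, ..., n-3 and A > n-2. *)

section \<open>Representations and optimal counts\<close>

definition represents :: "nat list \<Rightarrow> (nat \<Rightarrow> nat) \<Rightarrow> nat \<Rightarrow> bool" where
  "represents C x v \<longleftrightarrow> (\<Sum>i<length C. C ! i * x i) = v"

abbreviation num_coins :: "nat list \<Rightarrow> (nat \<Rightarrow> nat) \<Rightarrow> nat" where
  "num_coins C x \<equiv> \<Sum>i<length C. x i"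

lemma opt_le_num_coins: "represents C x v \<Longrightarrow> opt C v \<le> num_coins C x"
  unfolding opt_def represents_def by (rule Least_le) blast

lemma represents_multiple:
  assumes "i < length C"
  shows "represents C (\<lambda>j. if j = i then k else 0) (k * C ! i)"
    and "num_coins C (\<lambda>j. if j = i then k else 0) = k"
  using assms by (simp_all add: represents_def if_distrib sum.delta cong: if_cong)

lemma opt_multiple_le: "i < length C \<Longrightarrow> opt C (k * C ! i) \<le> k"
  using opt_le_num_coins represents_multiple by metis

lemma opt_coin_le: "c \<in> set C \<Longrightarrow> opt C c \<le> 1"
  by (metis in_set_conv_nth mult_1 opt_multiple_le)

lemma opt_le_self: "1 \<in> set C \<Longrightarrow> opt C v \<le> v"
  by (metis in_set_conv_nth mult.right_neutral opt_multiple_le)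

lemma opt_attained:
  assumes "1 \<in> set C"
  obtains x where "represents C x v" "num_coins C x = opt C v"
proof -
  obtain i where "i < length C" "C ! i = 1" using assms by (metis in_set_conv_nth)
  then have "\<exists>x. represents C x v" using represents_multiple(1)[of i C v] by auto
  then have "\<exists>k x. represents C x v \<and> num_coins C x = k" by blast
  then have "\<exists>x. represents C x v \<and> num_coins C x = opt C v"
    unfolding opt_def represents_def by (rule LeastI_ex)
  with that show thesis by blast
qed

lemma opt_add_le:
  assumes "1 \<in> set C"
  shows "opt C (u + v) \<le> opt C u + opt C v"
proof -
  obtain x y where "represents C x u" "num_coins C x = opt C u"
    "represents C y v" "num_coins C y = opt C v"
    using opt_attained[OF assms] by metis
  then have "represents C (\<lambda>i. x i + y i) (u + v)"
    and "num_coins C (\<lambda>i. x i + y i) = opt C u + opt C v"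
    by (simp_all add: represents_def algebra_simps sum.distrib)
  then show ?thesis by (metis opt_le_num_coins)
qed

lemma represents_remove_coin:
  assumes "represents C x v" "j < length C" "0 < x j"
  shows "C ! j \<le> v" "represents C (x(j := x j - 1)) (v - C ! j)"
    "num_coins C (x(j := x j - 1)) = num_coins C x - 1"
proof -
  have split: "(\<Sum>i<length C. f i) = f j + (\<Sum>i\<in>{..<length C} - {j}. f i)" for f :: "nat \<Rightarrow> nat"
    using assms(2) by (simp add: sum.remove)
  have same: "(\<Sum>i\<in>{..<length C} - {j}. f i ((x(j := a)) i)) = (\<Sum>i\<in>{..<length C} - {j}. f i (x i))"
    for f :: "nat \<Rightarrow> nat \<Rightarrow> nat" and a by (rule sum.cong) auto
  have "C ! j * x j = C ! j + C ! j * (x j - 1)" using assms(3) by (cases "x j") auto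
  then show "C ! j \<le> v" "represents C (x(j := x j - 1)) (v - C ! j)"
    using assms(1) split[of "\<lambda>i. C ! i * x i"] split[of "\<lambda>i. C ! i * (x(j := x j - 1)) i"]
      same[of "\<lambda>i y. C ! i * y"] unfolding represents_def by auto
  show "num_coins C (x(j := x j - 1)) = num_coins C x - 1"
    using assms(3) split[of x] split[of "x(j := x j - 1)"] same[of "\<lambda>i y. y"] by simp
qed

lemma opt_remove_coin_less:
  assumes "represents C x v" "j < length C" "0 < x j"
  shows "opt C (v - C ! j) < num_coins C x"
proof -
  have "0 < num_coins C x"
    using assms(2,3) by (metis finite_lessThan lessThan_iff not_gr_zero sum_eq_0_iff)
  then show ?thesis using represents_remove_coin[OF assms] opt_le_num_coins[of C] by fastforce
qed

lemma represents_snoc_upd: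
  assumes "represents C x u"
  shows "represents (C @ [c]) (x(length C := k)) (u + c * k)"
    and "num_coins (C @ [c]) (x(length C := k)) = num_coins C x + k"
  using assms by (simp_all add: represents_def nth_append cong: sum.cong_simp)

lemma opt_snoc_le:
  assumes "1 \<in> set C"
  shows "opt (C @ [c]) v \<le> opt C v"
proof -
  obtain x where "represents C x v" "num_coins C x = opt C v" using opt_attained[OF assms] by blast
  then show ?thesis using represents_snoc_upd[of C x v c 0] opt_le_num_coins by fastforce
qed

lemma represents_uniform:
  assumes "represents C x v" "\<forall>i<length C. 0 < x i \<longrightarrow> C ! i = a"
  shows "v = a * num_coins C x"
proof -
  have "(\<Sum>i<length C. C ! i * x i) = (\<Sum>i<length C. a * x i)"
    using assms(2) by (intro sum.cong) auto
  then show ?thesis using assms(1) by (simp add: represents_def sum_distrib_left)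
qed

lemma coin_system_one_mem: "coin_system C \<Longrightarrow> 1 \<in> set C"
  unfolding coin_system_def by (metis length_greater_0_conv nth_mem)

lemma coin_system_pos: "coin_system C \<Longrightarrow> c \<in> set C \<Longrightarrow> 0 < c"
  unfolding coin_system_def
  by (metis gr0I in_set_conv_nth less_numeral_extra(1) not_less0 sorted_wrt_nth_less)

lemma coin_system_appendD: "coin_system (C @ D) \<Longrightarrow> C \<noteq> [] \<Longrightarrow> coin_system C"
  by (simp add: coin_system_def nth_append sorted_wrt_append)

section \<open>Greedy counts\<close>

lemma grd_snoc: "grd (C @ [c]) v = v div c + grd C (v mod c)"
  by (simp add: grd_def)

lemma grd_Nil [simp]: "grd [] v = 0"
  by (simp add: grd_def)

lemma grd_0 [simp]: "grd C 0 = 0"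
  by (induction C rule: rev_induct) (simp_all add: grd_snoc)

lemma grd_take_top_coin:
  assumes "0 < c" "c \<le> v"
  shows "grd (C @ [c]) v = Suc (grd (C @ [c]) (v - c))"
  using assms by (simp add: grd_snoc le_div_geq le_mod_geq)

lemma grd_append_greater: "\<forall>c\<in>set D. v < c \<Longrightarrow> grd (C @ D) v = grd C v"
  by (induction D rule: rev_induct) (simp_all add: grd_snoc flip: append_assoc)

lemma grd_one_Cons_below: "\<forall>c\<in>set D. v < c \<Longrightarrow> grd (1 # D) v = v"
  using grd_append_greater[of D v "[1]"] by (simp add: grd_def)

lemma grd_eq_0_iff: "1 \<in> set C \<Longrightarrow> grd C v = 0 \<longleftrightarrow> v = 0"
proof (induction C arbitrary: v rule: rev_induct)
  case (snoc c C)
  show ?case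
  proof (cases "1 \<in> set C")
    case True
    have "grd (C @ [c]) v = 0 \<longleftrightarrow> v div c = 0 \<and> v mod c = 0"
      using snoc.IH[OF True] by (simp add: grd_snoc)
    also have "\<dots> \<longleftrightarrow> v = 0"
      by (metis add.right_neutral div_0 div_mult_mod_eq mod_0 mult_0_right)
    finally show ?thesis .
  next
    case False
    then show ?thesis using snoc.prems by (auto simp: grd_snoc)
  qed
qed simp

lemma grd_le_1:
  assumes "1 \<in> set C" "grd C v \<le> 1"
  shows "v = 0 \<or> v \<in> set C"
  using assms
proof (induction C arbitrary: v rule: rev_induct)
  case (snoc c C)
  show ?case
  proof (cases "1 \<in> set C")
    case True
    show ?thesis
    proof (cases "v div c = 0")
      case True
      then have "v mod c = v" by (cases "c = 0") (auto simp: div_eq_0_iff)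
      with True have "grd C v \<le> 1" using snoc.prems(2) by (simp add: grd_snoc)
      then show ?thesis using snoc.IH \<open>1 \<in> set C\<close> by auto
    next
      case False
      then have "v div c = 1" "grd C (v mod c) = 0" using snoc.prems(2) by (simp_all add: grd_snoc)
      then have "v = c" using grd_eq_0_iff[OF True] by (metis add.right_neutral div_mult_mod_eq mult_1)
      then show ?thesis by simp
    qed
  next
    case False
    then show ?thesis using snoc.prems by (auto simp: grd_snoc)
  qed
qed simp

lemma grd_coin:
  assumes "sorted_wrt (<) C" "c \<in> set C" "0 < c"
  shows "grd C c = 1"
proof -
  obtain B D where C: "C = (B @ [c]) @ D" using assms(2) by (metis append_Cons append_Nil append_assoc split_list)
  then have "\<forall>d\<in>set D. c < d" using assms(1) by (simp add: sorted_wrt_append)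
  then show ?thesis using assms(3) unfolding C grd_append_greater[OF \<open>\<forall>d\<in>set D. c < d\<close>]
    by (simp add: grd_snoc)
qed

lemma greedy_represents:
  assumes "1 \<in> set C"
  obtains x where "represents C x v" "num_coins C x = grd C v"
  using assms
proof (induction C arbitrary: v thesis rule: rev_induct)
  case (snoc c C)
  show ?case
  proof (cases "1 \<in> set C")
    case True
    then obtain y where "represents C y (v mod c)" "num_coins C y = grd C (v mod c)"
      using snoc.IH by blast
    then show ?thesis
      using represents_snoc_upd[of C y "v mod c" c "v div c"] snoc.prems(1) by (simp add: grd_snoc)
  next
    case False
    then have "c = 1" using snoc.prems(2) by simp
    have "represents C (\<lambda>_. 0) 0" by (simp add: represents_def)
    then show ?thesis
      using represents_snoc_upd[of C "\<lambda>_. 0" 0 c v] snoc.prems(1) \<open>c = 1\<close> by (simp add: grd_snoc)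
  qed
qed simp

lemma opt_le_grd: "1 \<in> set C \<Longrightarrow> opt C v \<le> grd C v"
  by (metis greedy_represents opt_le_num_coins)

lemma canonical_iff_grd_le_opt: "canonical C \<longleftrightarrow> (\<forall>v. grd C v \<le> opt C v)"
  unfolding canonical_def counterexample_def by (metis grd_0 le0 not_gr0 not_le)

lemma canonical_if_greedy_step:
  assumes "1 \<in> set C"
    and step: "\<And>c w. c \<in> set C \<Longrightarrow> c \<le> w \<Longrightarrow> grd C w \<le> Suc (grd C (w - c))"
  shows "canonical C"
proof -
  have grd_le: "grd C v \<le> num_coins C x" if "represents C x v" for x v
    using that
  proof (induction "num_coins C x" arbitrary: x v)
    case 0
    then have "v = 0" by (simp add: represents_def)
    then show ?case by simp
  next
    case (Suc k)
    then obtain j where j: "j < length C" "0 < x j"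
      by (metis finite_lessThan lessThan_iff not_gr_zero sum_eq_0_iff nat.distinct(1))
    note removed = represents_remove_coin[OF Suc.prems j]
    have "num_coins C (x(j := x j - 1)) = k" using removed(3) Suc.hyps(2) by simp
    then have "grd C (v - C ! j) \<le> k" using Suc.hyps(1)[OF _ removed(2)] by simp
    moreover have "grd C v \<le> Suc (grd C (v - C ! j))" using step j(1) removed(1) by simp
    ultimately show ?case using Suc.hyps(2) by simp
  qed
  show ?thesis unfolding canonical_def counterexample_def
    using grd_le opt_attained[OF assms(1)] by (metis not_le)
qed

lemma grd_snoc_step:
  assumes "c < t" "c \<le> w"
    and diff: "\<And>r. c \<le> r \<Longrightarrow> r < t \<Longrightarrow> grd C r \<le> Suc (grd C (r - c))"
    and wrap: "\<And>r. r < c \<Longrightarrow> grd C r \<le> grd C (t + r - c)"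
  shows "grd (C @ [t]) w \<le> Suc (grd (C @ [t]) (w - c))"
proof -
  define q r where "q = w div t" and "r = w mod t"
  have r: "r < t" and w: "w = t * q + r" using assms(1) by (simp_all add: q_def r_def)
  have grd_C: "grd (C @ [t]) (t * q' + r') = q' + grd C r'" if "r' < t" for q' r'
    using that by (simp add: grd_snoc)
  show ?thesis
  proof (cases "c \<le> r")
    case True
    then have "w - c = t * q + (r - c)" using w by simp
    then show ?thesis using grd_C[OF r] grd_C[of "r - c" q] diff[OF True r] w r by simp
  next
    case False
    then have "0 < q" using w assms(2) by (cases q) auto
    then have "w - c = t * (q - 1) + (t + r - c)"
      using w assms(1) by (cases q) (simp_all add: algebra_simps)
    then show ?thesis
      using grd_C[OF r] grd_C[of "t + r - c" "q - 1"] wrap[of r] False assms(1) w \<open>0 < q\<close> by simp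
  qed
qed

section \<open>The systems 1, ..., m, A, A + 1, 2A\<close>

declare upt_Suc [simp del]

lemma grd_upto_small: "v \<le> m \<Longrightarrow> grd [1..<Suc m] v = (if v = 0 then 0 else 1)"
  using grd_coin[of "[1..<Suc m]" v] by simp

lemma grd_upto:
  assumes "0 < m"
  shows "grd [1..<Suc m] v = (v + m - 1) div m"
proof -
  obtain k where m: "m = Suc k" using assms not0_implies_Suc by blast
  have mod_le: "v mod m \<le> k" using assms m by (metis less_Suc_eq_le mod_less_divisor)
  have "[1..<Suc m] = [1..<Suc k] @ [m]" using m by (simp add: upt_Suc_append)
  then have "grd [1..<Suc m] v = v div m + grd [1..<Suc k] (v mod m)" by (simp only: grd_snoc)
  also have "grd [1..<Suc k] (v mod m) = (if v mod m = 0 then 0 else 1)"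
    by (rule grd_upto_small[OF mod_le])
  also have "\<dots> = (v mod m + m - 1) div m"
  proof (cases "v mod m = 0")
    case False
    then show ?thesis using mod_le m by (intro div_nat_eqI[symmetric]) (auto intro: less_SucI)
  qed (simp add: m)
  also have "v div m + (v mod m + m - 1) div m = (v mod m + m - 1 + v div m * m) div m"
    using assms by (intro div_mult_self1[symmetric]) simp
  also have "v mod m + m - 1 + v div m * m = v + m - 1"
    using assms div_mult_mod_eq[of v m] by linarith
  finally show ?thesis .
qed

lemma grd_upto_mono:
  assumes "u \<le> v"
  shows "grd [1..<Suc m] u \<le> grd [1..<Suc m] v"
proof (cases "m = 0")
  case False
  then have m: "0 < m" by simp
  show ?thesis unfolding grd_upto[OF m] using assms by (simp add: div_le_mono)
qed simp

lemma grd_upto_le_Suc: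
  assumes "u \<le> v + m"
  shows "grd [1..<Suc m] u \<le> Suc (grd [1..<Suc m] v)"
proof (cases "m = 0")
  case False
  then have m: "0 < m" by simp
  have "(u + m - 1) div m \<le> (v + m - 1 + m) div m"
    using assms by (intro div_le_mono) linarith
  also have "\<dots> = Suc ((v + m - 1) div m)"
    using div_add_self2[of m "v + m - 1"] m by simp
  finally show ?thesis unfolding grd_upto[OF m] .
qed simp

text \<open>At \<open>r = A\<close> the truncated difference \<open>r - Suc A\<close> is \<open>0\<close>, giving the single coin \<open>A\<close>.\<close>

lemma grd_append_pair:
  assumes "r < 2 * A"
  shows "grd (D @ [A, Suc A]) r = (if r < A then grd D r else Suc (grd D (r - Suc A)))"
proof -
  have grd_eq: "grd (D @ [A, Suc A]) r = r div Suc A + (r mod Suc A) div A + grd D (r mod Suc A mod A)"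
    using grd_snoc[of "D @ [A]" "Suc A"] grd_snoc[of D A] by simp
  consider "r < A" | "r = A" | "A < r" by linarith
  then show ?thesis
  proof cases
    case 3
    then have "r div Suc A = 1" "r mod Suc A = r - Suc A" "r - Suc A < A"
      using assms by (simp_all add: div_nat_eqI le_mod_geq)
    with 3 grd_eq show ?thesis by simp
  qed (use grd_eq assms in simp_all)
qed

lemma grd_append_pair_double:
  assumes "0 < A"
  shows "grd (D @ [A, Suc A]) (2 * A) = Suc (grd D (A - 1))"
proof -
  have "2 * A div Suc A = 1" "2 * A mod Suc A = A - 1"
    using assms by (simp_all add: div_nat_eqI le_mod_geq)
  then show ?thesis using grd_snoc[of "D @ [A]" "Suc A" "2 * A"] grd_snoc[of D A "A - 1"] assms by simp
qed

lemma grd_upto_pair_le_Suc_diff: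
  assumes "m < A" "c \<in> set ([1..<Suc m] @ [A, Suc A])" "c \<le> r" "r < 2 * A"
  shows "grd ([1..<Suc m] @ [A, Suc A]) r \<le> Suc (grd ([1..<Suc m] @ [A, Suc A]) (r - c))"
proof -
  consider "1 \<le> c" "c \<le> m" | "c = A" | "c = Suc A" using assms(2) by auto
  then show ?thesis
  proof cases
    case 1
    then show ?thesis
      using assms grd_upto_le_Suc[of r "r - c"] grd_upto_le_Suc[of "r - Suc A" "r - c - Suc A"]
        grd_upto_mono[of "r - Suc A" "r - c"] by (auto simp: grd_append_pair)
  next
    case 2
    then show ?thesis using assms grd_upto_mono[of "r - Suc A" "r - A"] by (auto simp: grd_append_pair)
  qed (use assms in \<open>auto simp: grd_append_pair\<close>)
qed

lemma grd_upto_pair_le_wrap: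
  assumes "2 \<le> m" "m < A" "c \<in> set ([1..<Suc m] @ [A, Suc A])" "r < c"
  shows "grd ([1..<Suc m] @ [A, Suc A]) r \<le> grd ([1..<Suc m] @ [A, Suc A]) (2 * A + r - c)"
proof -
  consider "1 \<le> c" "c \<le> m" | "c = A" | "c = Suc A" using assms(3) by auto
  then show ?thesis
  proof cases
    case 1
    then have "grd [1..<Suc m] r \<le> 1" using assms grd_upto_le_Suc[of r 0 m] by simp
    with 1 assms show ?thesis by (auto simp: grd_append_pair)
  next
    case 2
    then show ?thesis using assms grd_upto_le_Suc[of r "r - 1"] by (auto simp: grd_append_pair)
  next
    case 3
    then show ?thesis
      using assms grd_upto_le_Suc[of r "r - 2"] grd_upto_mono[of 0 "r - 2"]
      by (cases "r = 0") (auto simp: grd_append_pair)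
  qed
qed

lemma canonical_upto_pair_double:
  assumes "2 \<le> m" "m < A"
  shows "canonical ([1..<Suc m] @ [A, Suc A, 2 * A])"
proof -
  let ?C' = "[1..<Suc m] @ [A, Suc A]"
  have "canonical (?C' @ [2 * A])"
  proof (rule canonical_if_greedy_step)
    show "1 \<in> set (?C' @ [2 * A])" using assms by simp
    fix c w
    assume c: "c \<in> set (?C' @ [2 * A])" "c \<le> w"
    show "grd (?C' @ [2 * A]) w \<le> Suc (grd (?C' @ [2 * A]) (w - c))"
    proof (cases "c = 2 * A")
      case True
      then show ?thesis using c(2) assms grd_take_top_coin[of "2 * A" w ?C'] by simp
    next
      case False
      then have c': "c \<in> set ?C'" "c < 2 * A" using c(1) assms by auto
      show ?thesis
        by (rule grd_snoc_step[OF c'(2) c(2)])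
          (use grd_upto_pair_le_Suc_diff[OF assms(2) c'(1)] grd_upto_pair_le_wrap[OF assms c'(1)]
            in auto)
    qed
  qed
  then show ?thesis by simp
qed

lemma not_canonical_upto_pair:
  assumes "0 < m" "Suc m < A"
  shows "\<not> canonical ([1..<Suc m] @ [A, Suc A])"
proof -
  let ?C = "[1..<Suc m] @ [A, Suc A]"
  have "opt ?C (A + A) \<le> opt ?C A + opt ?C A" using assms by (intro opt_add_le) simp
  also have "\<dots> \<le> 2" using opt_coin_le[of A ?C] by simp
  finally have opt: "opt ?C (2 * A) \<le> 2" by (simp add: mult_2)
  have "2 \<le> grd [1..<Suc m] (A - 1)"
  proof (rule ccontr)
    assume "\<not> 2 \<le> grd [1..<Suc m] (A - 1)"
    then have "A - 1 = 0 \<or> A - 1 \<in> set [1..<Suc m]" using assms by (intro grd_le_1) auto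
    with assms show False by auto
  qed
  moreover have "grd ?C (2 * A) = Suc (grd [1..<Suc m] (A - 1))"
    using assms by (simp add: grd_append_pair_double)
  ultimately have "counterexample ?C (2 * A)"
    using opt assms by (simp add: counterexample_def)
  then show ?thesis by (auto simp: canonical_def)
qed

section \<open>Least counterexamples\<close>

lemma least_counterexampleE:
  assumes "1 \<in> set C" "\<not> canonical C"
  obtains w x where "counterexample C w" "\<forall>v<w. grd C v \<le> opt C v"
    "represents C x w" "num_coins C x < grd C w"
proof -
  obtain w where w: "counterexample C w" "\<forall>v<w. \<not> counterexample C v"
    using assms(2) exists_least_iff[of "counterexample C"] by (auto simp: canonical_def)
  then have "\<forall>v<w. grd C v \<le> opt C v"
    by (metis counterexample_def grd_0 le0 not_gr0 not_le)
  moreover obtain x where "represents C x w" "num_coins C x = opt C w"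
    using opt_attained[OF assms(1)] by blast
  ultimately show thesis using that w(1) by (simp add: counterexample_def)
qed

lemma counterexample_ge_new_coin:
  assumes "canonical (C @ [c])" "1 \<in> set C" "counterexample C w"
  shows "c \<le> w"
proof (rule ccontr)
  assume "\<not> c \<le> w"
  then have "grd (C @ [c]) w = grd C w" by (simp add: grd_snoc)
  moreover have "opt (C @ [c]) w \<le> opt C w" by (rule opt_snoc_le[OF assms(2)])
  ultimately have "counterexample (C @ [c]) w" using assms(3) by (auto simp: counterexample_def)
  with assms(1) show False by (simp add: canonical_def)
qed

lemma least_counterexample_used_coins:
  assumes sys: "coin_system (D @ [b])"
    and below: "\<forall>v<w. grd (D @ [b]) v \<le> opt (D @ [b]) v"
    and x: "represents (D @ [b]) x w" "num_coins (D @ [b]) x < grd (D @ [b]) w"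
    and j: "j < Suc (length D)" "0 < x j"
  shows "j < length D \<and> w < b + D ! j"
proof -
  let ?E = "D @ [b]"
  have one: "1 \<in> set ?E" using sys by (rule coin_system_one_mem)
  have b: "0 < b" using coin_system_pos[OF sys] by simp
  have j': "j < length ?E" using j(1) by simp
  have c: "0 < ?E ! j" using coin_system_pos[OF sys nth_mem[OF j']] .
  have used: "?E ! j \<le> w" "opt ?E (w - ?E ! j) < num_coins ?E x"
    using represents_remove_coin(1)[OF x(1) j' j(2)] opt_remove_coin_less[OF x(1) j' j(2)] by auto
  have top: "grd ?E u = Suc (grd ?E (u - b))" if "b \<le> u" for u
    using grd_take_top_coin[OF b that] .
  have not_top: "j < length D"
  proof (rule ccontr)
    assume "\<not> j < length D"
    then have "?E ! j = b" using j(1) by (simp add: nth_append)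
    then have "grd ?E w \<le> Suc (opt ?E (w - b))" using top used(1) below b by fastforce
    then show False using used(2) x(2) \<open>?E ! j = b\<close> by simp
  qed
  have "w < b + D ! j"
  proof (rule ccontr)
    let ?c = "D ! j"
    assume "\<not> w < b + ?c"
    have c': "?E ! j = ?c" "0 < ?c" using not_top c by (simp_all add: nth_append)
    have "grd ?E w = Suc (grd ?E (w - b))" using top \<open>\<not> w < b + ?c\<close> by simp
    moreover have "grd ?E (w - b) \<le> opt ?E (w - b)" using below b c' \<open>\<not> w < b + ?c\<close> by simp
    moreover have "opt ?E (w - b) \<le> opt ?E (w - b - ?c) + opt ?E ?c"
      using opt_add_le[OF one, of "w - b - ?c" ?c] \<open>\<not> w < b + ?c\<close> by simp
    moreover have "opt ?E ?c \<le> 1" using opt_coin_le not_top by (simp add: nth_append)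
    moreover have "opt ?E (w - b - ?c) \<le> grd ?E (w - b - ?c)" using opt_le_grd[OF one] .
    moreover have "grd ?E (w - ?c) = Suc (grd ?E (w - b - ?c))"
      using top[of "w - ?c"] \<open>\<not> w < b + ?c\<close> by (simp add: diff_commute add.commute)
    moreover have "grd ?E (w - ?c) \<le> opt ?E (w - ?c)" using below c' \<open>\<not> w < b + ?c\<close> by simp
    ultimately show False using used(2) x(2) c' by simp
  qed
  with not_top show ?thesis by simp
qed

text \<open>Greedy pays \<open>2 * b - 1\<close> with the top coin and \<open>D ! 1 - 1\<close> ones, whereas
  \<open>b + A + (b - 1 - A)\<close> needs at most \<open>b - A + 1\<close> coins.\<close>

lemma canonical_top_coin_bound:
  assumes sys: "coin_system (D @ [A, b, 2 * b - D ! 1])" and len: "1 < length D"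
    and can: "canonical (D @ [A, b, 2 * b - D ! 1])"
  shows "A + D ! 1 \<le> Suc b"
proof -
  obtain d rest where D: "D = 1 # d # rest"
    using sys len unfolding coin_system_def
    by (metis Cons_nth_drop_Suc One_nat_def Suc_lessD drop0 length_greater_0_conv nth_append)
  let ?C = "D @ [A, b, 2 * b - d]"
  have order: "1 < d" "\<forall>c\<in>set rest. d < c" "d < A" "A < b" "b < 2 * b - d"
    using sys by (simp_all add: D coin_system_def sorted_wrt_append)
  have "\<forall>c\<in>set (d # rest @ [A, b]). d - 1 < c" using order by auto
  then have "grd (D @ [A, b]) (d - 1) = d - 1" using grd_one_Cons_below by (simp add: D)
  moreover have "(2 * b - 1) div (2 * b - d) = 1" "(2 * b - 1) mod (2 * b - d) = d - 1"
    using order by (simp_all add: div_nat_eqI le_mod_geq)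
  ultimately have "grd ?C (2 * b - 1) = d"
    using grd_snoc[of "D @ [A, b]" "2 * b - d" "2 * b - 1"] order by simp
  moreover have "opt ?C (2 * b - 1) \<le> Suc (Suc (b - 1 - A))"
  proof -
    have one: "1 \<in> set ?C" by (simp add: D)
    have "opt ?C (2 * b - 1) \<le> opt ?C b + opt ?C (A + (b - 1 - A))"
      using opt_add_le[OF one, of b "A + (b - 1 - A)"] order by (simp add: mult_2)
    also have "\<dots> \<le> opt ?C b + (opt ?C A + opt ?C (b - 1 - A))"
      using opt_add_le[OF one] by simp
    also have "\<dots> \<le> Suc (Suc (b - 1 - A))"
      using opt_coin_le[of b ?C] opt_coin_le[of A ?C] opt_le_self[OF one, of "b - 1 - A"] by simp
    finally show ?thesis .
  qed
  moreover have "grd ?C (2 * b - 1) \<le> opt ?C (2 * b - 1)"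
    using can by (simp add: canonical_iff_grd_le_opt D)
  ultimately show ?thesis using order by (simp add: D)
qed

lemma top_coins_if_canonical_extension:
  assumes sys: "coin_system (D @ [A, b, 2 * b - D ! 1])" and len: "1 < length D"
    and can: "canonical (D @ [A, b, 2 * b - D ! 1])" and noncan: "\<not> canonical (D @ [A, b])"
  shows "b = Suc A" "D ! 1 = 2" "2 < grd (D @ [A, b]) (2 * A)"
    "\<forall>v<2 * A. grd (D @ [A, b]) v \<le> opt (D @ [A, b]) v"
proof -
  let ?d = "D ! 1" and ?C' = "D @ [A, b]"
  have sorted: "sorted_wrt (<) (D @ [A, b, 2 * b - ?d])" using sys by (simp add: coin_system_def)
  then have D_less: "\<forall>c\<in>set D. c < A" and "A < b" by (simp_all add: sorted_wrt_append)
  have "D \<noteq> []" using len by auto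
  then have "D ! 0 = 1" using sys by (simp add: coin_system_def nth_append)
  moreover have "D ! 0 < ?d" using sorted len by (simp add: sorted_wrt_append sorted_wrt_nth_less)
  ultimately have d: "1 < ?d" "?d < A" using D_less len by simp_all
  have sys': "coin_system ((D @ [A]) @ [b])"
    using coin_system_appendD[of ?C' "[2 * b - ?d]"] sys by simp
  have one: "1 \<in> set ?C'" using coin_system_one_mem[OF sys'] by simp
  obtain w x where cw: "counterexample ?C' w" and below: "\<forall>v<w. grd ?C' v \<le> opt ?C' v"
    and x: "represents ?C' x w" "num_coins ?C' x < grd ?C' w"
    using least_counterexampleE[OF one noncan] by blast
  have lower: "2 * b - ?d \<le> w"
    using counterexample_ge_new_coin[of ?C' "2 * b - ?d" w] can one cw by simp
  have used: "w < b + ?C' ! j \<and> ?C' ! j \<le> A" if "j < length ?C'" "0 < x j" for j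
  proof -
    have "j < length (D @ [A]) \<and> w < b + (D @ [A]) ! j"
      using least_counterexample_used_coins[of "D @ [A]" b w x j] sys' below x that by simp
    then show ?thesis using D_less by (auto simp: nth_append less_imp_le)
  qed
  obtain j where j: "j < length ?C'" "0 < x j"
    using cw x(1) unfolding counterexample_def represents_def
    by (metis (no_types, lifting) lessThan_iff mult_0_right not_gr0 sum.neutral)
  have "Suc b = A + ?d"
    using used[OF j] lower canonical_top_coin_bound[OF sys len can] by linarith
  then have "\<forall>i<length ?C'. 0 < x i \<longrightarrow> ?C' ! i = A" using used lower d by fastforce
  then have w: "w = A * num_coins ?C' x" using represents_uniform[OF x(1)] by blast
  have "A * num_coins ?C' x < A * 3" "A * 2 \<le> A * num_coins ?C' x"
    using used[OF j] lower d \<open>Suc b = A + ?d\<close> unfolding w by linarith+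
  then have "num_coins ?C' x < 3" "2 \<le> num_coins ?C' x" using d by simp_all
  then have "num_coins ?C' x = 2" by linarith
  with w have "w = 2 * A" by simp
  then show "b = Suc A" "?d = 2" "2 < grd ?C' (2 * A)" "\<forall>v<2 * A. grd ?C' v \<le> opt ?C' v"
    using x(2) below lower d \<open>Suc b = A + ?d\<close> \<open>num_coins ?C' x = 2\<close> by auto
qed

lemma upt_if_sorted_pred_closed:
  assumes sorted: "sorted_wrt (<) D" and pos: "0 \<notin> set D"
    and closed: "\<forall>e\<in>set D. 1 < e \<longrightarrow> e - 1 \<in> set D"
  shows "D = [1..<Suc (length D)]"
proof (rule nth_equalityI)
  fix i
  assume "i < length D"
  then show "D ! i = [1..<Suc (length D)] ! i"
  proof (induction i rule: less_induct)
    case (less i)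
    have lower: "Suc i \<le> D ! i"
    proof (cases i)
      case 0
      then show ?thesis using pos less.prems by (metis Suc_leI gr0I nth_mem)
    next
      case (Suc k)
      then have "D ! k = Suc k" using less by simp
      moreover have "D ! k < D ! i" using sorted less.prems Suc by (simp add: sorted_wrt_nth_less)
      ultimately show ?thesis using Suc by simp
    qed
    have "D ! i \<le> Suc i"
    proof (rule ccontr)
      assume "\<not> D ! i \<le> Suc i"
      then have "D ! i - 1 \<in> set D" using closed less.prems by simp
      then obtain j where j: "j < length D" "D ! j = D ! i - 1" by (auto simp: in_set_conv_nth)
      have "j < i"
      proof (rule ccontr)
        assume "\<not> j < i"
        then have "D ! i \<le> D ! j" using sorted j(1)
          by (cases "i = j") (auto simp: sorted_wrt_nth_less less_imp_le)
        then show False using j(2) lower by linarith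
      qed
      then have "D ! j = Suc j" using less j(1) by simp
      then show False using j(2) \<open>j < i\<close> \<open>\<not> D ! i \<le> Suc i\<close> by linarith
    qed
    then show ?case using lower less.prems by (simp add: nth_upt)
  qed
qed simp

lemma upt_prefix_if_least_counterexample_double:
  assumes sys: "coin_system (D @ [A, Suc A])" and "D \<noteq> []"
    and below: "\<forall>v<2 * A. grd (D @ [A, Suc A]) v \<le> opt (D @ [A, Suc A]) v"
    and above: "2 < grd (D @ [A, Suc A]) (2 * A)"
  shows "D = [1..<Suc (length D)]" "Suc (length D) < A"
proof -
  let ?C' = "D @ [A, Suc A]"
  have sorted: "sorted_wrt (<) D" and D_less: "\<forall>e\<in>set D. e < A"
    using sys by (simp_all add: coin_system_def sorted_wrt_append)
  have "D ! 0 = 1" using sys \<open>D \<noteq> []\<close> by (simp add: coin_system_def nth_append)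
  then have one: "1 \<in> set D" using \<open>D \<noteq> []\<close> by (metis length_greater_0_conv nth_mem)
  have pos: "0 \<notin> set D" using coin_system_pos[OF sys] by fastforce
  have closed: "\<forall>e\<in>set D. 1 < e \<longrightarrow> e - 1 \<in> set D"
  proof (intro ballI impI)
    fix e
    assume e: "e \<in> set D" "1 < e"
    then have "e < A" using D_less by simp
    then have "Suc (grd D (e - 1)) = grd ?C' (A + e)" by (simp add: grd_append_pair)
    also have "\<dots> \<le> opt ?C' (A + e)" using below \<open>e < A\<close> by simp
    also have "\<dots> \<le> opt ?C' A + opt ?C' e" using opt_add_le[of ?C' A e] one by simp
    also have "\<dots> \<le> 2" using opt_coin_le[of A ?C'] opt_coin_le[of e ?C'] e(1) by simp
    finally have "grd D (e - 1) \<le> 1" by simp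
    then show "e - 1 \<in> set D" using grd_le_1[OF one] e(2) by fastforce
  qed
  show D: "D = [1..<Suc (length D)]" by (rule upt_if_sorted_pred_closed[OF sorted pos closed])
  have "0 < A" using one D_less by fastforce
  then have "grd D (A - 1) \<noteq> 1" using above by (simp add: grd_append_pair_double)
  then have "A - 1 \<notin> set D" using grd_coin[OF sorted] pos by (metis gr0I)
  have "set D = {1..<Suc (length D)}" by (subst D) simp
  then have "length D \<in> set D" using \<open>D \<noteq> []\<close> by (simp add: Suc_leI)
  with D_less \<open>A - 1 \<notin> set D\<close> show "Suc (length D) < A"
    by (cases "A = Suc (length D)") auto
qed

lemma canonical_extension_iff:
  assumes sys: "coin_system (D @ [A, b, 2 * b - D ! 1])" and len: "1 < length D"
  shows "(canonical (D @ [A, b, 2 * b - D ! 1]) \<and> \<not> canonical (D @ [A, b])) \<longleftrightarrow>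
    D = [1..<Suc (length D)] \<and> b = Suc A \<and> Suc (length D) < A"
proof
  assume "canonical (D @ [A, b, 2 * b - D ! 1]) \<and> \<not> canonical (D @ [A, b])"
  then have b: "b = Suc A" and "2 < grd (D @ [A, Suc A]) (2 * A)"
    and "\<forall>v<2 * A. grd (D @ [A, Suc A]) v \<le> opt (D @ [A, Suc A]) v"
    using top_coins_if_canonical_extension[OF sys len] by auto
  moreover have "coin_system (D @ [A, Suc A])"
    using coin_system_appendD[of "D @ [A, b]" "[2 * b - D ! 1]"] sys b by simp
  moreover have "D \<noteq> []" using len by auto
  ultimately show "D = [1..<Suc (length D)] \<and> b = Suc A \<and> Suc (length D) < A"
    using upt_prefix_if_least_counterexample_double[of D A] by blast
next
  assume R: "D = [1..<Suc (length D)] \<and> b = Suc A \<and> Suc (length D) < A"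
  define m where "m = length D"
  have D: "D = [1..<Suc m]" and b: "b = Suc A" and "Suc m < A" "2 \<le> m"
    using R len unfolding m_def by auto
  then have "D @ [A, b, 2 * b - D ! 1] = [1..<Suc m] @ [A, Suc A, 2 * A]"
    by (simp add: nth_upt)
  then show "canonical (D @ [A, b, 2 * b - D ! 1]) \<and> \<not> canonical (D @ [A, b])"
    using canonical_upto_pair_double[of m A] not_canonical_upto_pair[of m A] D b
      \<open>Suc m < A\<close> \<open>2 \<le> m\<close> by simp
qed

theorem theorem12:
  fixes C :: "nat list" and n :: nat
  assumes "n \<ge> 5"
    and "length C = n"
    and "coin_system C"
    and "C ! (n - 1) = 2 * C ! (n - 2) - C ! 1"
  shows "(canonical C \<and> \<not> canonical (take (n - 1) C)) \<longleftrightarrow>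
           ((\<forall>i < n - 3. C ! i = i + 1) \<and>
            C ! (n - 2) = C ! (n - 3) + 1 \<and>
            C ! (n - 1) = 2 * C ! (n - 3) \<and>
            C ! (n - 3) > n - 2)"
proof -
  define D A b where "D = take (n - 3) C" and "A = C ! (n - 3)" and "b = C ! (n - 2)"
  have len: "length D = n - 3" "1 < length D" using assms(1,2) by (simp_all add: D_def)
  have "C = D @ drop (n - 3) C" by (simp add: D_def)
  also have "drop (n - 3) C = [A, b, 2 * b - D ! 1]"
    using assms len by (intro nth_equalityI) (auto simp: A_def b_def D_def nth_Cons' less_Suc_eq numeral_eq_Suc)
  finally have C: "C = D @ [A, b, 2 * b - D ! 1]" .
  then have sys: "coin_system (D @ [A, b, 2 * b - D ! 1])" using assms(3) by simp
  have "take (n - 1) C = D @ [A, b]" using len(1) assms(1) by (subst C) (simp add: numeral_eq_Suc)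
  moreover have "Suc (length D) = n - 2" using len(1) assms(1) by simp
  ultimately have iff: "(canonical C \<and> \<not> canonical (take (n - 1) C)) \<longleftrightarrow>
      D = [1..<n - 2] \<and> b = Suc A \<and> n - 2 < A"
    using canonical_extension_iff[OF sys len(2)] C by simp
  have "(\<forall>i < n - 3. C ! i = i + 1) \<longleftrightarrow> D = [1..<n - 2]"
    using len(1) assms(1) by (auto simp: D_def list_eq_iff_nth_eq nth_upt)
  moreover have "D ! 1 = 2" if "D = [1..<n - 2]" using that assms(1) by (simp add: nth_upt)
  moreover have "C ! (n - 1) = 2 * b - D ! 1" using len C assms(1) by (auto simp: nth_append)
  ultimately show ?thesis unfolding iff A_def[symmetric] b_def[symmetric] by auto
qed

end
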